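(* Construct matrix $\check{\boldsymbol{\mathcal{A}}} \in \mathbb{R}^{4 s n^2\times 4 s n^2}$ with its $ij$-th $4n^2 \times 4n^2$ block given by $[\check{\boldsymbol{\mathcal{A}}}]_{ij}:= \mathbf{T}(j,i) \cdot \begin{bmatrix} \mathbf{A}_j & \\ & \mathbf{A}_j \end{bmatrix} \otimes \begin{bmatrix} \mathbf{A}_j & \\ & \mathbf{A}_j \end{bmatrix}$. Then, for all $k \in \mathbb{N}$, $\|\check{\boldsymbol{\mathcal{A}}}^k\| \leq \tau \rho^k$.
   Context: Let $\mathbf{A}_1,\dots,\mathbf{A}_s\in\mathbb{R}^{n\times n}$ be the state matrices of an MJS with Markov transition matrix $\mathbf{T}\in\mathbb{R}^{s\times s}$. Define the augmented matrix $\boldsymbol{\mathcal{A}}\in\mathbb{R}^{sn^2\times sn^2}$ with $ij$-th $n^2\times n^2$ block $\mathbf{T}(j,i)\,\mathbf{A}_j\otimes\mathbf{A}_j$. For any $\rho\ge\rho(\boldsymbol{\mathcal{A}})$ (spectral radius), let $\tau:=\sup_{k\in\mathbb{N}}\|\boldsymbol{\mathcal{A}}^k\|/\rho^k$, so that $\|\boldsymbol{\mathcal{A}}^k\|\le\tau\rho^k$ for all $k$. *)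

theory Defs
  imports "HOL-Analysis.Analysis"
begin

primrec matpow :: "real^'n^'n \<Rightarrow> nat \<Rightarrow> real^'n^'n" where
  "matpow M 0 = mat 1"
| "matpow M (Suc k) = M ** matpow M k"

definition mnorm :: "real^'n^'m \<Rightarrow> real" where
  "mnorm M = onorm (\<lambda>x. M *v x)"

definition cmat :: "real^'n^'m \<Rightarrow> complex^'n^'m" where
  "cmat M = (\<chi> i j. complex_of_real (M $ i $ j))"

definition spec_rad :: "real^'n^'n \<Rightarrow> real" where
  "spec_rad M = Sup {cmod z | z. \<exists>v. v \<noteq> 0 \<and> cmat M *v v = z *s v}"

text \<open>Kronecker product; row index (a,b) corresponds to block a, position b.\<close>
definition kron :: "real^'c^'a \<Rightarrow> real^'d^'b \<Rightarrow> real^('c \<times> 'd)^('a \<times> 'b)" where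
  "kron X Y = (\<chi> r c. X $ fst r $ fst c * Y $ snd r $ snd c)"

definition bdiag2 :: "real^'n^'n \<Rightarrow> real^(bool \<times> 'n)^(bool \<times> 'n)" where
  "bdiag2 X = (\<chi> r c. if fst r = fst c then X $ snd r $ snd c else 0)"

definition block_aug :: "real^'s^'s \<Rightarrow> ('s \<Rightarrow> real^'m^'m) \<Rightarrow> real^('s \<times> 'm)^('s \<times> 'm)" where
  "block_aug T B = (\<chi> r c. T $ fst c $ fst r * B (fst c) $ snd r $ snd c)"

definition augA :: "real^'s^'s \<Rightarrow> ('s \<Rightarrow> real^'n^'n) \<Rightarrow> real^('s \<times> 'n \<times> 'n)^('s \<times> 'n \<times> 'n)" where
  "augA T A = block_aug T (\<lambda>j. kron (A j) (A j))"

definition augA_check :: "real^'s^'s \<Rightarrow> ('s \<Rightarrow> real^'n^'n)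
    \<Rightarrow> real^('s \<times> (bool \<times> 'n) \<times> (bool \<times> 'n))^('s \<times> (bool \<times> 'n) \<times> (bool \<times> 'n))" where
  "augA_check T A = block_aug T (\<lambda>j. kron (bdiag2 (A j)) (bdiag2 (A j)))"

end

theory Submission
  imports Defs
begin

text \<open>After the reindexing \<open>((a, b), (s, i, j)) \<mapsto> (s, (a, i), (b, j))\<close>, the matrix
  \<open>augA_check T A\<close> becomes the block diagonal matrix with four copies of \<open>augA T A\<close>
  on its diagonal, one for each pair \<open>(a, b)\<close> of diagonal blocks of \<open>diag(A\<^sub>j, A\<^sub>j)\<close>.
  Hence its powers are the corresponding block diagonal matrices of powers, and since the
  Euclidean norm squared of a vector is the sum of the squared norms of its four slices,
  every power of \<open>augA_check T A\<close> has spectral norm at most that of the same power of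
  \<open>augA T A\<close>.\<close>

definition slice :: "('c \<times> 'i \<Rightarrow> 'r) \<Rightarrow> 'c \<Rightarrow> real^'r \<Rightarrow> real^'i" where
  "slice g c x = (\<chi> i. x $ g (c, i))"

lemma sum_UNIV_bij_pair:
  fixes g :: "'c::finite \<times> 'i::finite \<Rightarrow> 'r::finite" and h :: "'r \<Rightarrow> real"
  assumes "bij g"
  shows "sum h UNIV = (\<Sum>c\<in>UNIV. \<Sum>i\<in>UNIV. h (g (c, i)))"
proof -
  have "sum h UNIV = sum (h \<circ> g) UNIV"
    using sum.reindex_bij_betw[OF assms, of h] by (simp add: comp_def)
  also have "\<dots> = (\<Sum>c\<in>UNIV. \<Sum>i\<in>UNIV. h (g (c, i)))"
    by (simp add: sum.cartesian_product UNIV_Times_UNIV[symmetric] del: UNIV_Times_UNIV)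
  finally show ?thesis .
qed

lemma norm_power2_eq_sum_slice:
  fixes g :: "'c::finite \<times> 'i::finite \<Rightarrow> 'r::finite" and x :: "real^'r"
  assumes "bij g"
  shows "(norm x)\<^sup>2 = (\<Sum>c\<in>UNIV. (norm (slice g c x))\<^sup>2)"
  by (simp add: power2_norm_eq_inner inner_vec_def slice_def
      sum_UNIV_bij_pair[OF assms, where h = "\<lambda>r. x $ r * x $ r"])

lemma slice_mult_vec_block_diag:
  fixes g :: "'c::finite \<times> 'i::finite \<Rightarrow> 'r::finite"
    and N :: "real^'r^'r" and M :: "real^'i^'i"
  assumes "bij g"
    and N_entry: "\<And>c c' i i'. N $ g (c, i) $ g (c', i') = (if c = c' then M $ i $ i' else 0)"
  shows "slice g c (N *v y) = M *v slice g c y"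
proof -
  have "(N *v y) $ g (c, i) = (M *v slice g c y) $ i" for i
  proof -
    have "(N *v y) $ g (c, i) = (\<Sum>c'\<in>UNIV. \<Sum>i'\<in>UNIV. N $ g (c, i) $ g (c', i') * y $ g (c', i'))"
      unfolding matrix_vector_mult_def
      by (simp add: sum_UNIV_bij_pair[OF assms(1), where h = "\<lambda>r. N $ g (c, i) $ r * y $ r"])
    also have "\<dots> = (\<Sum>c'\<in>UNIV. if c' = c then \<Sum>i'\<in>UNIV. M $ i $ i' * y $ g (c', i') else 0)"
      by (intro sum.cong) (auto simp: N_entry)
    finally show ?thesis
      by (simp add: matrix_vector_mult_def slice_def)
  qed
  then show ?thesis
    by (simp add: slice_def vec_eq_iff)
qed

lemma slice_matpow:
  assumes "\<And>c y. slice g c (N *v y) = M *v slice g c y"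
  shows "slice g c (matpow N k *v y) = matpow M k *v slice g c y"
  by (induction k arbitrary: y) (simp_all add: matrix_vector_mul_assoc[symmetric] assms)

lemma mnorm_le_if_slice_mult_vec:
  fixes g :: "'c::finite \<times> 'i::finite \<Rightarrow> 'r::finite"
    and N :: "real^'r^'r" and M :: "real^'i^'i"
  assumes "bij g"
    and slice_N: "\<And>c y. slice g c (N *v y) = M *v slice g c y"
  shows "mnorm N \<le> mnorm M"
proof -
  have mnorm_M: "norm (M *v z) \<le> mnorm M * norm z" for z
    unfolding mnorm_def by (rule onorm) simp
  have "norm (N *v x) \<le> mnorm M * norm x" for x
  proof (rule power2_le_imp_le)
    have "(norm (N *v x))\<^sup>2 = (\<Sum>c\<in>UNIV. (norm (M *v slice g c x))\<^sup>2)"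
      by (simp add: norm_power2_eq_sum_slice[OF assms(1)] slice_N)
    also have "\<dots> \<le> (\<Sum>c\<in>UNIV. (mnorm M * norm (slice g c x))\<^sup>2)"
      by (intro sum_mono power_mono mnorm_M) simp
    also have "\<dots> = (mnorm M * norm x)\<^sup>2"
      by (simp add: power_mult_distrib sum_distrib_left norm_power2_eq_sum_slice[OF assms(1)])
    finally show "(norm (N *v x))\<^sup>2 \<le> (mnorm M * norm x)\<^sup>2" .
    show "0 \<le> mnorm M * norm x"
      using onorm_pos_le[of "\<lambda>x. M *v x"] by (simp add: mnorm_def)
  qed
  then show ?thesis
    unfolding mnorm_def by (rule onorm_le)
qed

definition bdiag2_index :: "(bool \<times> bool) \<times> ('s \<times> 'n \<times> 'n) \<Rightarrow> 's \<times> (bool \<times> 'n) \<times> (bool \<times> 'n)" where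
  "bdiag2_index = (\<lambda>((a, b), (s, i, j)). (s, (a, i), (b, j)))"

lemma bij_bdiag2_index: "bij bdiag2_index"
  by (rule o_bij[where g = "\<lambda>(s, (a, i), (b, j)). ((a, b), (s, i, j))"])
    (auto simp: bdiag2_index_def fun_eq_iff)

lemma block_aug_kron_bdiag2_entry:
  "block_aug T (\<lambda>j. kron (bdiag2 (X j)) (bdiag2 (Y j))) $ bdiag2_index (c, r) $ bdiag2_index (c', r')
    = (if c = c' then block_aug T (\<lambda>j. kron (X j) (Y j)) $ r $ r' else 0)"
  by (cases c; cases c'; cases r; cases r')
    (auto simp: block_aug_def kron_def bdiag2_def bdiag2_index_def)

lemma mnorm_matpow_augA_check_le:
  "mnorm (matpow (augA_check T A) k) \<le> mnorm (matpow (augA T A) k)"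
proof (rule mnorm_le_if_slice_mult_vec[OF bij_bdiag2_index])
  fix c y
  show "slice bdiag2_index c (matpow (augA_check T A) k *v y)
      = matpow (augA T A) k *v slice bdiag2_index c y"
    by (intro slice_matpow slice_mult_vec_block_diag[OF bij_bdiag2_index])
      (simp add: augA_check_def augA_def block_aug_kron_bdiag2_entry)
qed

theorem lemma12:
  fixes A :: "'s::finite \<Rightarrow> real^'n::finite^'n" and T :: "real^'s^'s" and \<rho> \<tau> :: real
  assumes T_nonneg: "\<forall>i j. T $ i $ j \<ge> 0"
    and T_stoch: "\<forall>i. (\<Sum>j\<in>UNIV. T $ i $ j) = 1"
    and rho: "\<rho> \<ge> spec_rad (augA T A)"
    and tau_def: "\<tau> = (SUP k. mnorm (matpow (augA T A) k) / \<rho> ^ k)"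
    and tau_bound: "\<forall>k. mnorm (matpow (augA T A) k) \<le> \<tau> * \<rho> ^ k"
  shows "\<forall>k. mnorm (matpow (augA_check T A) k) \<le> \<tau> * \<rho> ^ k"
  using mnorm_matpow_augA_check_le tau_bound order_trans by blast

end
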